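(* Let $\Gamma$ be a finitely generated group and $H\le\Gamma$ an amenable subgroup. If for some finite symmetric generating set $S$ the Schreier graph $\mathrm{Sch}(\Gamma,H,S)$ is multi-ended, then $\Gamma$ is extraterrestrial.
   Context: The Schreier graph $\mathrm{Sch}(\Gamma,H,S)$ has vertices the right cosets $Hg$ and edges $\{Hg,Hgs\}$, $s\in S$. A connected graph is multi-ended if there is a finite set of vertices whose removal leaves at least two infinite connected components. A finitely generated group is extraterrestrial if its Cayley graph with respect to some (equivalently any) finite symmetric generating set is extraterrestrial, where a graph $G=(V,E)$ is extraterrestrial if for every $m$ there is $k$ such that for every $r$ there is a triple $(U,F,O)$ of pairwise disjoint finite vertex sets with $U\neq\emptyset$, $|U|\ge m|F|$, a bijection $\mu:U\to O$ with $d_G(u,\mu(u))\le k$, and every path from $U$ to $O$ either contains a vertex of $F$ or has length at least $r$. *)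

theory Defs
  imports "HOL-Algebra.Algebra" "HOL-Library.Extended_Nat"
begin

definition walk :: "'v set \<Rightarrow> ('v \<Rightarrow> 'v \<Rightarrow> bool) \<Rightarrow> 'v list \<Rightarrow> bool" where
  "walk V E p \<longleftrightarrow> p \<noteq> [] \<and> set p \<subseteq> V \<and> successively E p"

definition walk_len :: "'v list \<Rightarrow> nat" where
  "walk_len p = length p - 1"

definition gdist :: "'v set \<Rightarrow> ('v \<Rightarrow> 'v \<Rightarrow> bool) \<Rightarrow> 'v \<Rightarrow> 'v \<Rightarrow> enat" where
  "gdist V E u v = (INF p \<in> {p. walk V E p \<and> hd p = u \<and> last p = v}. enat (walk_len p))"

definition graph_connected :: "'v set \<Rightarrow> ('v \<Rightarrow> 'v \<Rightarrow> bool) \<Rightarrow> bool" where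
  "graph_connected V E \<longleftrightarrow>
     V \<noteq> {} \<and> (\<forall>u\<in>V. \<forall>v\<in>V. \<exists>p. walk V E p \<and> hd p = u \<and> last p = v)"

definition induced_component :: "'v set \<Rightarrow> ('v \<Rightarrow> 'v \<Rightarrow> bool) \<Rightarrow> 'v \<Rightarrow> 'v set" where
  "induced_component W E v = {w. \<exists>p. walk W E p \<and> hd p = v \<and> last p = w}"

definition multi_ended :: "'v set \<Rightarrow> ('v \<Rightarrow> 'v \<Rightarrow> bool) \<Rightarrow> bool" where
  "multi_ended V E \<longleftrightarrow> graph_connected V E \<and>
     (\<exists>K. K \<subseteq> V \<and> finite K \<and>
        (\<exists>a\<in>V - K. \<exists>b\<in>V - K.
           infinite (induced_component (V - K) E a) \<and>
           infinite (induced_component (V - K) E b) \<and>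
           induced_component (V - K) E a \<noteq> induced_component (V - K) E b))"

definition extraterrestrial_graph :: "'v set \<Rightarrow> ('v \<Rightarrow> 'v \<Rightarrow> bool) \<Rightarrow> bool" where
  "extraterrestrial_graph V E \<longleftrightarrow>
     (\<forall>m::nat. \<exists>k::nat. \<forall>r::nat. \<exists>U F Ou \<mu>.
        U \<subseteq> V \<and> F \<subseteq> V \<and> Ou \<subseteq> V \<and> finite U \<and> finite F \<and> finite Ou \<and>
        U \<inter> F = {} \<and> U \<inter> Ou = {} \<and> F \<inter> Ou = {} \<and> U \<noteq> {} \<and>
        card U \<ge> m * card F \<and> bij_betw \<mu> U Ou \<and>
        (\<forall>u\<in>U. gdist V E u (\<mu> u) \<le> enat k) \<and>
        (\<forall>p. walk V E p \<and> hd p \<in> U \<and> last p \<in> Ou \<longrightarrow>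
              set p \<inter> F \<noteq> {} \<or> walk_len p \<ge> r))"

definition fin_symm_gen_set :: "('a, 'b) monoid_scheme \<Rightarrow> 'a set \<Rightarrow> bool" where
  "fin_symm_gen_set G S \<longleftrightarrow> finite S \<and> S \<subseteq> carrier G \<and>
     (\<forall>s\<in>S. m_inv G s \<in> S) \<and> generate G S = carrier G"

definition finitely_generated_group :: "('a, 'b) monoid_scheme \<Rightarrow> bool" where
  "finitely_generated_group G \<longleftrightarrow> (\<exists>S. finite S \<and> S \<subseteq> carrier G \<and> generate G S = carrier G)"

definition schreier_vertices :: "('a, 'b) monoid_scheme \<Rightarrow> 'a set \<Rightarrow> 'a set set" where
  "schreier_vertices G H = RCOSETS G H"

definition schreier_edge :: "('a, 'b) monoid_scheme \<Rightarrow> 'a set \<Rightarrow> 'a set \<Rightarrow> 'a set \<Rightarrow> 'a set \<Rightarrow> bool" where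
  "schreier_edge G H S A B \<longleftrightarrow>
     (\<exists>g\<in>carrier G. \<exists>s\<in>S. A = r_coset G H g \<and> B = r_coset G H (g \<otimes>\<^bsub>G\<^esub> s))"

definition cayley_edge :: "('a, 'b) monoid_scheme \<Rightarrow> 'a set \<Rightarrow> 'a \<Rightarrow> 'a \<Rightarrow> bool" where
  "cayley_edge G S x y \<longleftrightarrow> (\<exists>s\<in>S. y = x \<otimes>\<^bsub>G\<^esub> s)"

definition extraterrestrial_group :: "('a, 'b) monoid_scheme \<Rightarrow> bool" where
  "extraterrestrial_group G \<longleftrightarrow>
     (\<exists>S. fin_symm_gen_set G S \<and> extraterrestrial_graph (carrier G) (cayley_edge G S))"

definition amenable_group :: "('a, 'b) monoid_scheme \<Rightarrow> bool" where
  "amenable_group G \<longleftrightarrow> (\<exists>\<mu> :: 'a set \<Rightarrow> real.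
     \<mu> (carrier G) = 1 \<and>
     (\<forall>A \<subseteq> carrier G. \<mu> A \<ge> 0) \<and>
     (\<forall>A B. A \<subseteq> carrier G \<and> B \<subseteq> carrier G \<and> A \<inter> B = {} \<longrightarrow> \<mu> (A \<union> B) = \<mu> A + \<mu> B) \<and>
     (\<forall>g\<in>carrier G. \<forall>A \<subseteq> carrier G. \<mu> (l_coset G g A) = \<mu> A))"

definition amenable_subgroup :: "'a set \<Rightarrow> ('a, 'b) monoid_scheme \<Rightarrow> bool" where
  "amenable_subgroup H G \<longleftrightarrow> subgroup H G \<and> amenable_group (G\<lparr>carrier := H\<rparr>)"

end

(*
  Choose a finite set K of cosets whose removal leaves two infinite components CA, CB of the
  Schreier graph, and pair n cosets of CA bijectively with n cosets of CB, where n > 2 m |K|.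
  Lifting to representatives x and \<beta> x gives finitely many "jumps" inv x \<otimes> \<beta> x, all in some
  word ball of radius k.  For a finite Y \<subseteq> H, the points inv y \<otimes> x (sources) and inv y \<otimes> \<beta> x
  (targets) project into CA and CB respectively, so a Cayley path of length at most r between
  them must hit a vertex over K within distance r of the sources; these blockers all lie in
  inv (W Y) R for a finite W \<subseteq> H depending on r only (R representatives of K).  Amenability of H
  yields Y with |W Y| \<le> 2 |Y|, so there are at most 2 |Y| |K| blockers against |Y| n sources.
  The small-doubling set Y comes from the invariant mean by contradiction: otherwise Hall's
  theorem (extended to countable families by compactness) would map two copies of H injectively
  into H by bounded left translations, and the mean would give the image measure 2.
*)

theory Submission
  imports Defs "HOL-Library.Countable_Set"
begin

section \<open>Hall's marriage theorem\<close>

definition hall_condition :: "'i set \<Rightarrow> ('i \<Rightarrow> 'x set) \<Rightarrow> bool" where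
  "hall_condition I A \<longleftrightarrow> (\<forall>J\<subseteq>I. finite J \<longrightarrow> card J \<le> card (\<Union>(A ` J)))"

lemma hall_condition_subset: "hall_condition I A \<Longrightarrow> J \<subseteq> I \<Longrightarrow> hall_condition J A"
  unfolding hall_condition_def by auto

lemma hall_condition_remove_critical:
  assumes hall: "hall_condition I A" and fin: "finite I" and finA: "\<forall>i\<in>I. finite (A i)"
    and J: "J \<subseteq> I" "card J = card (\<Union>(A ` J))"
  shows "hall_condition (I - J) (\<lambda>i. A i - \<Union>(A ` J))"
  unfolding hall_condition_def
proof (intro allI impI)
  fix L assume L: "L \<subseteq> I - J" "finite L"
  have finJ: "finite J" using J(1) fin finite_subset by blast
  have "finite (\<Union>(A ` J))" using finA J(1) finite_subset[OF J(1) fin] by blast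
  then have "card (\<Union>i\<in>L. A i - \<Union>(A ` J)) = card (\<Union>(A ` (L \<union> J))) - card (\<Union>(A ` J))"
    by (subst card_Diff_subset[symmetric]) (auto intro!: arg_cong[where f = card])
  moreover have "card (L \<union> J) \<le> card (\<Union>(A ` (L \<union> J)))"
    using hall L J(1) finJ unfolding hall_condition_def by blast
  moreover have "card (L \<union> J) = card L + card J"
    using L finJ by (subst card_Un_disjoint) auto
  ultimately show "card L \<le> card (\<Union>i\<in>L. A i - \<Union>(A ` J))" using J(2) by linarith
qed

lemma hall_condition_remove_element:
  assumes strict: "\<forall>J\<subseteq>I. J \<noteq> {} \<longrightarrow> J \<noteq> I \<longrightarrow> finite J \<longrightarrow> card J < card (\<Union>(A ` J))"
    and "i \<in> I"
  shows "hall_condition (I - {i}) (\<lambda>j. A j - {a})"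
  unfolding hall_condition_def
proof (intro allI impI)
  fix L assume L: "L \<subseteq> I - {i}" "finite L"
  show "card L \<le> card (\<Union>j\<in>L. A j - {a})"
  proof (cases "L = {}")
    case False
    then have "card L < card (\<Union>(A ` L))" using strict L \<open>i \<in> I\<close> by blast
    moreover have "card (\<Union>(A ` L)) - 1 \<le> card (\<Union>(A ` L) - {a})"
      using diff_card_le_card_Diff[of "{a}" "\<Union>(A ` L)"] by simp
    moreover have "(\<Union>j\<in>L. A j - {a}) = \<Union>(A ` L) - {a}" by auto
    ultimately show ?thesis by simp
  qed simp
qed

theorem hall_marriage:
  assumes "finite I" "\<forall>i\<in>I. finite (A i)" "hall_condition I A"
  shows "\<exists>f. inj_on f I \<and> (\<forall>i\<in>I. f i \<in> A i)"
  using assms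
proof (induction "card I" arbitrary: I A rule: less_induct)
  case less
  note fin = less.prems(1) and finA = less.prems(2) and hall = less.prems(3)
  consider (critical) J where "J \<subseteq> I" "J \<noteq> {}" "J \<noteq> I" "card J = card (\<Union>(A ` J))"
    | (strict) "\<forall>J\<subseteq>I. J \<noteq> {} \<longrightarrow> J \<noteq> I \<longrightarrow> finite J \<longrightarrow> card J < card (\<Union>(A ` J))"
    using hall fin unfolding hall_condition_def by (meson le_neq_implies_less rev_finite_subset)
  then show ?case
  proof cases
    case critical
    define AJ where "AJ = \<Union>(A ` J)"
    have finJ: "finite J" using critical(1) fin by (rule finite_subset)
    have "card J < card I" using critical fin by (meson psubsetI psubset_card_mono)
    have "card J > 0" using finJ critical(2) by auto
    then have "card (I - J) < card I"
      using card_Diff_subset[OF finJ critical(1)] card_mono[OF fin critical(1)] by linarith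
    have "\<exists>f. inj_on f J \<and> (\<forall>i\<in>J. f i \<in> A i)"
      by (rule less.hyps[OF \<open>card J < card I\<close>])
        (use finJ finA critical(1) hall_condition_subset[OF hall critical(1)] in auto)
    then obtain f1 where f1: "inj_on f1 J" "\<forall>i\<in>J. f1 i \<in> A i" by blast
    have "\<exists>f. inj_on f (I - J) \<and> (\<forall>i\<in>I - J. f i \<in> A i - AJ)"
      by (rule less.hyps[OF \<open>card (I - J) < card I\<close>])
        (use fin finA hall_condition_remove_critical[OF hall fin finA critical(1,4)] in
          \<open>auto simp: AJ_def\<close>)
    then obtain f2 where f2: "inj_on f2 (I - J)" "\<forall>i\<in>I - J. f2 i \<in> A i - AJ" by blast
    have "f1 i \<in> AJ" if "i \<in> J" for i
      using that f1(2) unfolding AJ_def by blast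
    then have "f1 i \<noteq> f2 j" if "i \<in> J" "j \<in> I - J" for i j
      using that f2(2) by fastforce
    then have "inj_on (\<lambda>i. if i \<in> J then f1 i else f2 i) I"
      using f1(1) f2(1) unfolding inj_on_def by (metis Diff_iff)
    then show ?thesis using f1 f2 by (intro exI[of _ "\<lambda>i. if i \<in> J then f1 i else f2 i"]) auto
  next
    case strict
    show ?thesis
    proof (cases "I = {}")
      case False
      then obtain i where i: "i \<in> I" by blast
      have "card {i} \<le> card (\<Union>(A ` {i}))" using hall i unfolding hall_condition_def by blast
      then obtain a where a: "a \<in> A i" by fastforce
      have "card (I - {i}) < card I" using fin i by (rule card_Diff1_less)
      then have "\<exists>f. inj_on f (I - {i}) \<and> (\<forall>j\<in>I - {i}. f j \<in> A j - {a})"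
        by (rule less.hyps) (use fin finA hall_condition_remove_element[OF strict i] in auto)
      then obtain f where f: "inj_on f (I - {i})" "\<forall>j\<in>I - {i}. f j \<in> A j - {a}" by blast
      have "inj_on (f(i := a)) I" using f i unfolding inj_on_def by auto
      then show ?thesis using f a by (intro exI[of _ "f(i := a)"]) auto
    qed simp
  qed
qed

lemma finite_cofinal_choice:
  fixes P :: "'c \<Rightarrow> nat \<Rightarrow> bool"
  assumes "finite C" "\<And>N. \<exists>c\<in>C. P c N" "\<And>c N N'. P c N' \<Longrightarrow> N \<le> N' \<Longrightarrow> P c N"
  shows "\<exists>c\<in>C. \<forall>N. P c N"
proof -
  have "UNIV = (\<Union>c\<in>C. {N. P c N})" using assms(2) by blast
  then obtain c where "c \<in> C" "infinite {N. P c N}"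
    using assms(1) infinite_UNIV_nat by (metis finite_UN)
  then show ?thesis using assms(3) by (metis infinite_nat_iff_unbounded_le mem_Collect_eq)
qed

lemma cofinal_extension:
  fixes P :: "nat \<Rightarrow> ('i \<Rightarrow> 'x) \<Rightarrow> bool"
  assumes "finite Z'" "\<And>i. i \<in> Z' \<Longrightarrow> finite (A i)" "Z \<subseteq> Z'"
    and P_mono: "\<And>N N' g. P N' g \<Longrightarrow> N \<le> N' \<Longrightarrow> P N g"
    and P_range: "\<And>g i. P M g \<Longrightarrow> i \<in> Z' \<Longrightarrow> g i \<in> A i"
    and ext: "\<forall>N. \<exists>g. P N g \<and> (\<forall>i\<in>Z. g i = f i)"
  shows "\<exists>f'. (\<forall>N. \<exists>g. P N g \<and> (\<forall>i\<in>Z'. g i = f' i)) \<and> (\<forall>i\<in>Z. f' i = f i)"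
proof -
  define Q where "Q c N \<longleftrightarrow> (\<exists>g. P N g \<and> (\<forall>i\<in>Z. g i = f i) \<and> (\<forall>i\<in>Z'. g i = c i))" for c N
  have "finite (Z' \<rightarrow>\<^sub>E \<Union>(A ` Z'))" using assms(1,2) by (intro finite_PiE) auto
  moreover have "\<exists>c\<in>Z' \<rightarrow>\<^sub>E \<Union>(A ` Z'). Q c N" for N
  proof -
    obtain g where g: "P (max N M) g" "\<forall>i\<in>Z. g i = f i" using ext by blast
    then have "P M g" "P N g" using P_mono by auto
    then show ?thesis unfolding Q_def using g P_range
      by (intro bexI[of _ "restrict g Z'"]) auto
  qed
  moreover have "Q c N" if "Q c N'" "N \<le> N'" for c N N'
    using that P_mono unfolding Q_def by blast
  ultimately obtain c where c: "\<forall>N. Q c N" by (metis finite_cofinal_choice)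
  then have "\<forall>N. \<exists>g. P N g \<and> (\<forall>i\<in>Z'. g i = c i)" unfolding Q_def by blast
  moreover obtain g where "\<forall>i\<in>Z. g i = f i" "\<forall>i\<in>Z'. g i = c i" using c unfolding Q_def by blast
  ultimately show ?thesis using assms(3) by force
qed

lemma compactness_choice:
  fixes D :: "nat \<Rightarrow> 'i set" and A :: "'i \<Rightarrow> 'x set" and P :: "nat \<Rightarrow> ('i \<Rightarrow> 'x) \<Rightarrow> bool"
  assumes D: "\<And>N. finite (D N)" "\<And>N N'. N \<le> N' \<Longrightarrow> D N \<subseteq> D N'"
    and A: "\<And>N i. i \<in> D N \<Longrightarrow> finite (A i)"
    and P_ex: "\<And>N. \<exists>f. P N f"
    and P_mono: "\<And>N N' f. P N' f \<Longrightarrow> N \<le> N' \<Longrightarrow> P N f"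
    and P_local: "\<And>N f g. P N f \<Longrightarrow> (\<And>i. i \<in> D N \<Longrightarrow> g i = f i) \<Longrightarrow> P N g"
    and P_range: "\<And>N f i. P N f \<Longrightarrow> i \<in> D N \<Longrightarrow> f i \<in> A i"
  shows "\<exists>f. \<forall>N. P N f"
proof -
  define extendable where "extendable Z f \<longleftrightarrow> (\<forall>N. \<exists>g. P N g \<and> (\<forall>i\<in>Z. g i = f i))" for Z f
  have extend: "\<exists>f'. extendable (D M) f' \<and> (\<forall>i\<in>Z. f' i = f i)"
    if "extendable Z f" "Z \<subseteq> D M" for Z M f
    unfolding extendable_def
  proof (rule cofinal_extension[where A = A and M = M])
    show "\<forall>N. \<exists>g. P N g \<and> (\<forall>i\<in>Z. g i = f i)" using that(1) unfolding extendable_def .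
  qed (use D(1) A that(2) P_mono P_range in blast)+
  obtain f0 where "P 0 f0" using P_ex by blast
  then have "extendable {} f0" unfolding extendable_def using P_ex by simp
  then obtain seq0 where "extendable (D 0) seq0" using extend[of "{}" f0 0] by blast
  then have "\<exists>seq. \<forall>n. extendable (D n) (seq n) \<and> (\<forall>i\<in>D n. seq (Suc n) i = seq n i)"
    using extend D(2) by (intro dependent_nat_choice) auto
  then obtain seq where seq: "\<And>n. extendable (D n) (seq n)" "\<And>n. \<forall>i\<in>D n. seq (Suc n) i = seq n i"
    by blast
  have seq_stable: "seq n' i = seq n i" if "i \<in> D n" "n \<le> n'" for i n n'
    using that(2)
  proof (induction rule: dec_induct)
    case (step m)
    then show ?case using seq(2)[of m] D(2)[OF step.hyps(1)] that(1) by auto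
  qed simp
  have seq_P: "P n (seq n)" for n
    using seq(1)[of n] P_local unfolding extendable_def by metis
  define f where "f i = seq (LEAST n. i \<in> D n) i" for i
  have "P N f" for N
  proof (rule P_local[OF seq_P])
    fix i assume "i \<in> D N"
    then show "f i = seq N i" unfolding f_def by (metis LeastI Least_le seq_stable)
  qed
  then show ?thesis by blast
qed

theorem hall_marriage_countable:
  assumes "countable I" "\<forall>i\<in>I. finite (A i)" "hall_condition I A"
  shows "\<exists>f. inj_on f I \<and> (\<forall>i\<in>I. f i \<in> A i)"
proof (cases "I = {}")
  case False
  define D where "D N = from_nat_into I ` {..<N}" for N
  have D_sub: "D N \<subseteq> I" for N unfolding D_def using False by (auto intro: from_nat_into)
  have in_D: "i \<in> D (Suc (to_nat_on I i))" if "i \<in> I" for i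
    unfolding D_def using that assms(1) by (auto intro!: image_eqI[of _ _ "to_nat_on I i"])
  define matching where "matching N f \<longleftrightarrow> inj_on f (D N) \<and> (\<forall>i\<in>D N. f i \<in> A i)" for N f
  have "\<exists>f. \<forall>N. matching N f"
  proof (rule compactness_choice[where A = A])
    show "\<exists>f. matching N f" for N
    proof -
      have "\<forall>i\<in>D N. finite (A i)" using D_sub assms(2) by blast
      moreover have "hall_condition (D N) A" using hall_condition_subset[OF assms(3) D_sub] .
      ultimately show ?thesis unfolding matching_def by (intro hall_marriage) (simp_all add: D_def)
    qed
    show "matching N f" if "matching N' f" "N \<le> N'" for N N' f
      using that unfolding matching_def D_def by (auto intro: inj_on_subset)
    show "matching N g" if "matching N f" "\<And>i. i \<in> D N \<Longrightarrow> g i = f i" for N f g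
      using that inj_on_cong[of "D N" g f] unfolding matching_def by auto
  qed (use D_sub assms(2) in \<open>auto simp: D_def matching_def\<close>)
  then obtain f where f: "\<And>N. matching N f" by blast
  have "inj_on f I"
  proof (rule inj_onI)
    fix i j assume "i \<in> I" "j \<in> I" "f i = f j"
    define N where "N = Suc (max (to_nat_on I i) (to_nat_on I j))"
    have "i \<in> D N" "j \<in> D N" using in_D \<open>i \<in> I\<close> \<open>j \<in> I\<close> unfolding N_def D_def by force+
    then show "i = j" using f[of N] \<open>f i = f j\<close> unfolding matching_def by (auto dest: inj_onD)
  qed
  moreover have "f i \<in> A i" if "i \<in> I" for i using f in_D[OF that] unfolding matching_def by blast
  ultimately show ?thesis by blast
qed simp

section \<open>Invariant means and sets of small doubling\<close>

definition invariant_mean :: "('a, 'b) monoid_scheme \<Rightarrow> ('a set \<Rightarrow> real) \<Rightarrow> bool" where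
  "invariant_mean G \<mu> \<longleftrightarrow> \<mu> (carrier G) = 1 \<and> (\<forall>A \<subseteq> carrier G. \<mu> A \<ge> 0) \<and>
     (\<forall>A B. A \<subseteq> carrier G \<and> B \<subseteq> carrier G \<and> A \<inter> B = {} \<longrightarrow> \<mu> (A \<union> B) = \<mu> A + \<mu> B) \<and>
     (\<forall>g\<in>carrier G. \<forall>A \<subseteq> carrier G. \<mu> (g <#\<^bsub>G\<^esub> A) = \<mu> A)"

lemma amenable_group_iff_invariant_mean: "amenable_group G \<longleftrightarrow> (\<exists>\<mu>. invariant_mean G \<mu>)"
  unfolding amenable_group_def invariant_mean_def ..

context
  fixes G :: "('a, 'b) monoid_scheme" and \<mu> :: "'a set \<Rightarrow> real"
  assumes \<mu>: "invariant_mean G \<mu>"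
begin

lemma invariant_mean_carrier: "\<mu> (carrier G) = 1"
  and invariant_mean_nonneg: "A \<subseteq> carrier G \<Longrightarrow> \<mu> A \<ge> 0"
  and invariant_mean_Un: "A \<subseteq> carrier G \<Longrightarrow> B \<subseteq> carrier G \<Longrightarrow> A \<inter> B = {} \<Longrightarrow> \<mu> (A \<union> B) = \<mu> A + \<mu> B"
  and invariant_mean_l_coset: "g \<in> carrier G \<Longrightarrow> A \<subseteq> carrier G \<Longrightarrow> \<mu> (g <#\<^bsub>G\<^esub> A) = \<mu> A"
  using \<mu> unfolding invariant_mean_def by auto

lemma invariant_mean_empty: "\<mu> {} = 0"
  using invariant_mean_Un[of "{}" "{}"] by simp

lemma invariant_mean_le_one:
  assumes "A \<subseteq> carrier G"
  shows "\<mu> A \<le> 1"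
proof -
  have "\<mu> (carrier G) = \<mu> A + \<mu> (carrier G - A)"
    using assms invariant_mean_Un[of A "carrier G - A"] by (simp add: Un_absorb1)
  then show ?thesis using invariant_mean_carrier invariant_mean_nonneg[of "carrier G - A"] by simp
qed

lemma invariant_mean_UN:
  assumes "finite I" "\<forall>i\<in>I. Q i \<subseteq> carrier G" "disjoint_family_on Q I"
  shows "\<mu> (\<Union>i\<in>I. Q i) = (\<Sum>i\<in>I. \<mu> (Q i))"
  using assms
proof (induction I rule: finite_induct)
  case (insert i I)
  have "\<mu> (Q i \<union> (\<Union>j\<in>I. Q j)) = \<mu> (Q i) + \<mu> (\<Union>j\<in>I. Q j)"
    using insert.prems insert.hyps(2) unfolding disjoint_family_on_def
    by (intro invariant_mean_Un) fastforce+
  then show ?case using insert by (simp add: disjoint_family_on_insert)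
qed (simp add: invariant_mean_empty)

end

context group
begin

lemma invariant_mean_shift_image:
  assumes \<mu>: "invariant_mean G \<mu>" and W: "finite W" "W \<subseteq> carrier G"
    and \<phi>: "inj_on \<phi> (carrier G)" "\<And>y. y \<in> carrier G \<Longrightarrow> \<phi> y \<in> (\<lambda>w. w \<otimes> y) ` W"
  shows "\<mu> (\<phi> ` carrier G) = 1"
proof -
  have "\<forall>y\<in>carrier G. \<exists>w. w \<in> W \<and> \<phi> y = w \<otimes> y" using \<phi>(2) by blast
  then obtain c where c: "\<forall>y\<in>carrier G. c y \<in> W \<and> \<phi> y = c y \<otimes> y" by (metis bchoice)
  define B where "B w = {y \<in> carrier G. c y = w}" for w
  have B_sub: "B w \<subseteq> carrier G" for w unfolding B_def by auto
  have shift_sub: "w <# B w \<subseteq> carrier G" if "w \<in> W" for w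
    using that W(2) B_sub by (auto simp: l_coset_def)
  have "\<phi> ` carrier G = (\<Union>w\<in>W. w <# B w)"
    using c unfolding B_def l_coset_def by force
  moreover have "disjoint_family_on (\<lambda>w. w <# B w) W"
    unfolding disjoint_family_on_def
  proof (intro ballI impI, rule ccontr)
    fix w w' assume "w \<in> W" "w' \<in> W" "w \<noteq> w'" "(w <# B w) \<inter> (w' <# B w') \<noteq> {}"
    then obtain y y' where y: "y \<in> B w" "y' \<in> B w'" "w \<otimes> y = w' \<otimes> y'"
      unfolding l_coset_def by auto
    then have "\<phi> y = \<phi> y'" using c unfolding B_def by auto
    then have "y = y'" using \<phi>(1) y(1,2) B_sub by (auto dest: inj_onD)
    then show False using y(1,2) \<open>w \<noteq> w'\<close> unfolding B_def by auto
  qed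
  moreover have "disjoint_family_on B W" unfolding disjoint_family_on_def B_def by auto
  moreover have "(\<Union>w\<in>W. B w) = carrier G" using c unfolding B_def by auto
  ultimately have "\<mu> (\<phi> ` carrier G) = (\<Sum>w\<in>W. \<mu> (w <# B w))"
    using invariant_mean_UN[OF \<mu> W(1)] shift_sub by simp
  also have "\<dots> = (\<Sum>w\<in>W. \<mu> (B w))"
    using invariant_mean_l_coset[OF \<mu>] B_sub W(2) by (intro sum.cong) auto
  also have "\<dots> = \<mu> (\<Union>w\<in>W. B w)"
    using invariant_mean_UN[OF \<mu> W(1), of B] B_sub \<open>disjoint_family_on B W\<close> by simp
  finally show ?thesis
    using \<open>(\<Union>w\<in>W. B w) = carrier G\<close> invariant_mean_carrier[OF \<mu>] by simp
qed

lemma invariant_mean_no_doubling_injection: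
  assumes \<mu>: "invariant_mean G \<mu>" and W: "finite W" "W \<subseteq> carrier G"
    and \<Phi>: "inj_on \<Phi> (carrier G \<times> (UNIV :: bool set))" "\<And>y b. y \<in> carrier G \<Longrightarrow> \<Phi> (y, b) \<in> (\<lambda>w. w \<otimes> y) ` W"
  shows False
proof -
  define P where "P b = (\<lambda>y. \<Phi> (y, b)) ` carrier G" for b
  have "\<mu> (P b) = 1" for b
    unfolding P_def using \<Phi> by (intro invariant_mean_shift_image[OF \<mu> W]) (auto simp: inj_on_def)
  moreover have "P b \<subseteq> carrier G" for b
  proof -
    have "\<Phi> (y, b) \<in> carrier G" if "y \<in> carrier G" for y using \<Phi>(2)[of y b] W(2) that by auto
    then show ?thesis unfolding P_def by auto
  qed
  moreover have "P True \<inter> P False = {}" unfolding P_def using \<Phi>(1) by (auto dest: inj_onD)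
  ultimately have "\<mu> (P True \<union> P False) = 2" by (simp add: invariant_mean_Un[OF \<mu>])
  moreover have "\<mu> (P True \<union> P False) \<le> 1"
    using \<open>\<And>b. P b \<subseteq> carrier G\<close> by (intro invariant_mean_le_one[OF \<mu>]) auto
  ultimately show False by simp
qed

theorem amenable_small_doubling:
  assumes "amenable_group G" "countable (carrier G)" "finite W" "W \<subseteq> carrier G"
  shows "\<exists>Y. finite Y \<and> Y \<noteq> {} \<and> Y \<subseteq> carrier G \<and> card (W <#> Y) \<le> 2 * card Y"
proof (rule ccontr)
  assume no_small: "\<not> ?thesis"
  obtain \<mu> where \<mu>: "invariant_mean G \<mu>" using assms(1) amenable_group_iff_invariant_mean by blast
  define A where "A = (\<lambda>p :: 'a \<times> bool. (\<lambda>w. w \<otimes> fst p) ` W)"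
  have "hall_condition (carrier G \<times> UNIV) A"
    unfolding hall_condition_def
  proof (intro allI impI)
    fix J :: "('a \<times> bool) set" assume J: "J \<subseteq> carrier G \<times> UNIV" "finite J"
    have "card J \<le> card (fst ` J \<times> (UNIV :: bool set))"
      using J(2) by (intro card_mono) (simp, force)
    then have "card J \<le> 2 * card (fst ` J)" by (simp add: card_cartesian_product)
    moreover have "\<Union>(A ` J) = W <#> fst ` J" unfolding A_def set_mult_def by auto
    moreover have "fst ` J \<subseteq> carrier G" using J(1) by auto
    then have "\<not> card (W <#> fst ` J) \<le> 2 * card (fst ` J)" if "fst ` J \<noteq> {}"
      using no_small J(2) that by blast
    ultimately show "card J \<le> card (\<Union>(A ` J))" by fastforce
  qed
  moreover have "countable (carrier G \<times> (UNIV :: bool set))" using assms(2) by simp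
  moreover have "\<forall>i\<in>carrier G \<times> UNIV. finite (A i)" unfolding A_def using assms(3) by auto
  ultimately obtain \<Phi> where \<Phi>: "inj_on \<Phi> (carrier G \<times> UNIV)" "\<forall>i\<in>carrier G \<times> UNIV. \<Phi> i \<in> A i"
    using hall_marriage_countable by blast
  show False
    by (rule invariant_mean_no_doubling_injection[OF \<mu> assms(3,4) \<Phi>(1)]) (use \<Phi>(2) A_def in auto)
qed

end

lemma walk_Cons:
  "walk V E (x # p) \<longleftrightarrow> x \<in> V \<and> (p = [] \<or> E x (hd p) \<and> walk V E p)"
  unfolding walk_def by (cases p) (auto simp: successively_Cons)

lemma walk_append:
  assumes "walk V E p" "walk V E q" "last p = hd q"
  shows "walk V E (p @ tl q)" "hd (p @ tl q) = hd p" "last (p @ tl q) = last q"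
proof -
  have pq: "p \<noteq> []" "q \<noteq> []" using assms unfolding walk_def by auto
  then obtain x q' where q: "q = x # q'" by (cases q) auto
  have "successively E p" "successively E q" "set p \<subseteq> V" "set q \<subseteq> V"
    using assms unfolding walk_def by auto
  then show "walk V E (p @ tl q)" unfolding walk_def using pq q assms(3)
    by (auto simp: successively_append_iff successively_Cons)
  show "hd (p @ tl q) = hd p" using pq by simp
  show "last (p @ tl q) = last q" using pq q assms(3) by (cases q') auto
qed

lemma walk_rev:
  assumes "walk V E p" "\<And>x y. E x y \<Longrightarrow> E y x"
  shows "walk V E (rev p)" "hd (rev p) = last p" "last (rev p) = hd p"
proof -
  have "successively E p" using assms unfolding walk_def by auto
  then have "successively (\<lambda>x y. E y x) p" by (rule successively_mono) (use assms(2) in blast)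
  then show "walk V E (rev p)" using assms(1) unfolding walk_def by auto
  show "hd (rev p) = last p" "last (rev p) = hd p" using assms(1) unfolding walk_def
    by (auto simp: hd_rev last_rev)
qed

lemma walk_map:
  assumes "walk V E p" "\<forall>x\<in>set p. f x \<in> V'" "\<And>x y. x \<in> V \<Longrightarrow> y \<in> V \<Longrightarrow> E x y \<Longrightarrow> E' (f x) (f y)"
  shows "walk V' E' (map f p)" "hd (map f p) = f (hd p)" "last (map f p) = f (last p)"
proof -
  have p: "successively E p" "set p \<subseteq> V" "p \<noteq> []" using assms unfolding walk_def by auto
  have "successively (\<lambda>x y. E' (f x) (f y)) p" using p(1)
    by (rule successively_mono) (use assms(3) p(2) in blast)
  then show "walk V' E' (map f p)" using assms(2) p(3) unfolding walk_def
    by (auto simp: successively_map)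
  show "hd (map f p) = f (hd p)" "last (map f p) = f (last p)" using p(3)
    by (auto simp: hd_map last_map)
qed

lemma gdist_le_walk_len:
  assumes "walk V E p" "hd p = u" "last p = v"
  shows "gdist V E u v \<le> enat (walk_len p)"
  unfolding gdist_def using assms by (intro INF_lower) auto

lemma induced_component_subset: "induced_component W E a \<subseteq> W"
  unfolding induced_component_def walk_def by auto

lemma induced_component_walk:
  assumes "c \<in> induced_component W E a" "walk W E q" "hd q = c"
  shows "last q \<in> induced_component W E a"
proof -
  obtain p where "walk W E p" "hd p = a" "last p = c"
    using assms(1) unfolding induced_component_def by auto
  then have "walk W E (p @ tl q) \<and> hd (p @ tl q) = a \<and> last (p @ tl q) = last q"
    using walk_append[of W E p q] assms by simp
  then show ?thesis unfolding induced_component_def by blast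
qed

lemma induced_component_eqI:
  assumes sym: "\<And>x y. E x y \<Longrightarrow> E y x"
    and "c \<in> induced_component W E a" "c \<in> induced_component W E b"
  shows "induced_component W E a = induced_component W E b"
proof -
  have "induced_component W E x \<subseteq> induced_component W E y"
    if cx: "c \<in> induced_component W E x" and cy: "c \<in> induced_component W E y" for x y
  proof
    fix z assume "z \<in> induced_component W E x"
    then obtain q where q: "walk W E q" "hd q = x" "last q = z"
      unfolding induced_component_def by blast
    obtain p where p: "walk W E p" "hd p = x" "last p = c"
      using cx unfolding induced_component_def by blast
    have "x \<in> induced_component W E y"
      using induced_component_walk[OF cy walk_rev(1)[OF p(1) sym]] walk_rev(2,3)[OF p(1) sym] p
      by simp
    then show "z \<in> induced_component W E y" using induced_component_walk[OF _ q(1,2)] q(3) by simp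
  qed
  then show ?thesis using assms(2,3) by blast
qed

section \<open>Word balls and Cayley graphs\<close>

primrec word_ball :: "('a, 'b) monoid_scheme \<Rightarrow> 'a set \<Rightarrow> nat \<Rightarrow> 'a set" where
  "word_ball G S 0 = {\<one>\<^bsub>G\<^esub>}"
| "word_ball G S (Suc n) = word_ball G S n \<union> (\<lambda>(s, x). s \<otimes>\<^bsub>G\<^esub> x) ` (S \<times> word_ball G S n)"

lemma word_ball_finite: "finite S \<Longrightarrow> finite (word_ball G S n)"
  by (induction n) auto

lemma word_ball_mono: "n \<le> m \<Longrightarrow> word_ball G S n \<subseteq> word_ball G S m"
  by (rule lift_Suc_mono_le[of "word_ball G S"]) auto

context group
begin

lemma word_ball_carrier: "S \<subseteq> carrier G \<Longrightarrow> word_ball G S n \<subseteq> carrier G"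
  by (induction n) auto

lemma word_ball_mult:
  assumes "S \<subseteq> carrier G" "x \<in> word_ball G S n" "y \<in> word_ball G S m"
  shows "x \<otimes> y \<in> word_ball G S (n + m)"
  using assms(2)
proof (induction n arbitrary: x)
  case 0
  have "y \<in> carrier G" using assms(3) word_ball_carrier[OF assms(1)] by blast
  then show ?case using 0 assms(3) by simp
next
  case (Suc n)
  show ?case
  proof (cases "x \<in> word_ball G S n")
    case True
    then show ?thesis using Suc.IH word_ball_mono[of "n + m" "Suc n + m" G S] by auto
  next
    case False
    then obtain s x' where sx: "s \<in> S" "x' \<in> word_ball G S n" "x = s \<otimes> x'" using Suc.prems by auto
    have "s \<in> carrier G" "x' \<in> carrier G" "y \<in> carrier G"
      using sx assms(1,3) word_ball_carrier[OF assms(1)] by blast+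
    then have "x \<otimes> y = s \<otimes> (x' \<otimes> y)" using sx(3) by (simp add: m_assoc)
    then show ?thesis using Suc.IH[OF sx(2)] sx(1) by force
  qed
qed

lemma generate_in_word_ball:
  assumes "S \<subseteq> carrier G" "\<forall>s\<in>S. inv s \<in> S" "x \<in> generate G S"
  shows "\<exists>n. x \<in> word_ball G S n"
  using assms(3)
proof (induction rule: generate.induct)
  case one
  show ?case by (rule exI[of _ 0]) simp
next
  case (incl h)
  have "h \<otimes> \<one> \<in> word_ball G S (Suc 0)" unfolding word_ball.simps
    by (rule UnI2, rule image_eqI[where x="(h, \<one>)"]) (use incl in auto)
  then show ?case using incl assms(1) by (metis r_one subsetD)
next
  case (inv h)
  have "inv h \<otimes> \<one> \<in> word_ball G S (Suc 0)" unfolding word_ball.simps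
    by (rule UnI2, rule image_eqI[where x="(inv h, \<one>)"]) (use inv assms(2) in auto)
  then show ?case using inv assms(1) by (metis inv_closed r_one subsetD)
next
  case (eng h1 h2)
  then show ?case using word_ball_mult[OF assms(1)] by blast
qed

lemma fin_symm_gen_set_word_balls:
  assumes "fin_symm_gen_set G S"
  shows "carrier G = (\<Union>n. word_ball G S n)"
proof -
  have S: "S \<subseteq> carrier G" "\<forall>s\<in>S. inv s \<in> S" "generate G S = carrier G"
    using assms unfolding fin_symm_gen_set_def by auto
  show ?thesis
  proof
    show "carrier G \<subseteq> (\<Union>n. word_ball G S n)" using generate_in_word_ball[OF S(1,2)] S(3) by auto
    show "(\<Union>n. word_ball G S n) \<subseteq> carrier G" using word_ball_carrier[OF S(1)] by auto
  qed
qed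

lemma fin_symm_gen_set_word_ball:
  assumes "fin_symm_gen_set G S" "finite T" "T \<subseteq> carrier G"
  shows "\<exists>k. T \<subseteq> word_ball G S k"
proof -
  have "T \<subseteq> (\<Union>n. word_ball G S n)" using fin_symm_gen_set_word_balls[OF assms(1)] assms(3) by simp
  then have "\<forall>x\<in>T. \<exists>n. x \<in> word_ball G S n" by auto
  then obtain n where n: "\<forall>x\<in>T. x \<in> word_ball G S (n x)" by (rule bchoice[THEN exE])
  have "n x \<le> Max (insert 0 (n ` T))" if "x \<in> T" for x using assms(2) that by simp
  then have "T \<subseteq> word_ball G S (Max (insert 0 (n ` T)))" using n word_ball_mono by (meson subsetD subsetI)
  then show ?thesis ..
qed

lemma fin_symm_gen_set_countable:
  assumes "fin_symm_gen_set G S"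
  shows "countable (carrier G)"
proof -
  have "finite S" using assms unfolding fin_symm_gen_set_def by simp
  then have "countable (\<Union>n. word_ball G S n)"
    by (intro countable_UN) (auto intro: countable_finite word_ball_finite)
  then show ?thesis using fin_symm_gen_set_word_balls[OF assms] by simp
qed

lemma cayley_walk_word_ball:
  assumes "S \<subseteq> carrier G" "walk (carrier G) (cayley_edge G S) p" "x \<in> set p"
  shows "\<exists>z\<in>word_ball G S (walk_len p). x = hd p \<otimes> z"
  using assms(2,3)
proof (induction p)
  case (Cons y p)
  show ?case
  proof (cases "x = y")
    case True
    then show ?thesis using Cons.prems word_ball_mono[of 0 "walk_len (y # p)" G S]
      by (force simp: walk_Cons)
  next
    case False
    then have p: "p \<noteq> []" "cayley_edge G S y (hd p)" "walk (carrier G) (cayley_edge G S) p" "x \<in> set p"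
      using Cons.prems by (auto simp: walk_Cons)
    obtain s where s: "s \<in> S" "hd p = y \<otimes> s" using p(2) unfolding cayley_edge_def by blast
    obtain z where z: "z \<in> word_ball G S (walk_len p)" "x = hd p \<otimes> z" using Cons.IH p(3,4) by blast
    have "y \<in> carrier G" "s \<in> carrier G" "z \<in> carrier G"
      using s z Cons.prems assms(1) word_ball_carrier[OF assms(1)] by (auto simp: walk_Cons)
    then have "x = y \<otimes> (s \<otimes> z)" using s(2) z(2) by (simp add: m_assoc)
    moreover have "walk_len (y # p) = Suc (walk_len p)" using p(1) by (simp add: walk_len_def)
    moreover have "s \<otimes> z \<in> word_ball G S (Suc (walk_len p))" unfolding word_ball.simps
      by (rule UnI2, rule image_eqI[where x = "(s, z)"]) (use s(1) z(1) in auto)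
    ultimately show ?thesis by auto
  qed
qed simp

lemma cayley_walk_from_word_ball:
  assumes "S \<subseteq> carrier G" "z \<in> word_ball G S n" "y \<in> carrier G"
  shows "\<exists>p. walk (carrier G) (cayley_edge G S) p \<and> hd p = y \<and> last p = y \<otimes> z \<and> walk_len p \<le> n"
  using assms(2,3)
proof (induction n arbitrary: z y)
  case 0
  then show ?case by (intro exI[of _ "[y]"]) (auto simp: walk_def walk_len_def)
next
  case (Suc n)
  show ?case
  proof (cases "z \<in> word_ball G S n")
    case True
    then show ?thesis using Suc.IH Suc.prems by force
  next
    case False
    then obtain s z' where sz: "s \<in> S" "z' \<in> word_ball G S n" "z = s \<otimes> z'" using Suc.prems by auto
    have s: "s \<in> carrier G" "z' \<in> carrier G" using sz assms(1) word_ball_carrier[OF assms(1)] by auto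
    obtain p where p: "walk (carrier G) (cayley_edge G S) p" "hd p = y \<otimes> s"
      "last p = (y \<otimes> s) \<otimes> z'" "walk_len p \<le> n"
      using Suc.IH[OF sz(2)] s Suc.prems(2) by blast
    have "p \<noteq> []" using p(1) by (simp add: walk_def)
    then have "walk (carrier G) (cayley_edge G S) (y # p) \<and> hd (y # p) = y \<and>
        last (y # p) = y \<otimes> z \<and> walk_len (y # p) \<le> Suc n"
      using p s sz Suc.prems(2) by (auto simp: walk_Cons cayley_edge_def walk_len_def m_assoc)
    then show ?thesis by blast
  qed
qed

lemma gdist_cayley_word_ball:
  assumes "S \<subseteq> carrier G" "z \<in> word_ball G S n" "y \<in> carrier G"
  shows "gdist (carrier G) (cayley_edge G S) y (y \<otimes> z) \<le> enat n"
proof -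
  obtain p where "walk (carrier G) (cayley_edge G S) p" "hd p = y" "last p = y \<otimes> z" "walk_len p \<le> n"
    using cayley_walk_from_word_ball[OF assms] by blast
  then show ?thesis using gdist_le_walk_len order_trans enat_ord_simps(1) by metis
qed

end

section \<open>Separating triples from two ends of a Schreier graph\<close>

definition separating_triple ::
    "'v set \<Rightarrow> ('v \<Rightarrow> 'v \<Rightarrow> bool) \<Rightarrow> nat \<Rightarrow> nat \<Rightarrow> 'v set \<Rightarrow> 'v set \<Rightarrow> 'v set \<Rightarrow> ('v \<Rightarrow> 'v) \<Rightarrow> bool"
  where
  "separating_triple V E k r U F Ou \<mu> \<longleftrightarrow>
     U \<subseteq> V \<and> F \<subseteq> V \<and> Ou \<subseteq> V \<and> finite U \<and> finite F \<and> finite Ou \<and>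
     U \<inter> F = {} \<and> U \<inter> Ou = {} \<and> F \<inter> Ou = {} \<and> U \<noteq> {} \<and> bij_betw \<mu> U Ou \<and>
     (\<forall>u\<in>U. gdist V E u (\<mu> u) \<le> enat k) \<and>
     (\<forall>p. walk V E p \<and> hd p \<in> U \<and> last p \<in> Ou \<longrightarrow> set p \<inter> F \<noteq> {} \<or> walk_len p \<ge> r)"

lemma extraterrestrial_graph_iff_separating_triples:
  "extraterrestrial_graph V E \<longleftrightarrow>
     (\<forall>m. \<exists>k. \<forall>r. \<exists>U F Ou \<mu>. separating_triple V E k r U F Ou \<mu> \<and> card U \<ge> m * card F)"
  unfolding extraterrestrial_graph_def separating_triple_def by (simp only: conj_ac)

context group
begin

lemma r_coset_inv_mult:
  assumes "subgroup H G" "y \<in> H" "x \<in> carrier G"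
  shows "H #> (inv y \<otimes> x) = H #> x"
proof -
  have "inv y \<in> H" using assms(1,2) by (rule subgroup.m_inv_closed)
  then have y: "inv y \<in> carrier G" using subgroup.subset[OF assms(1)] by blast
  have "H #> (inv y \<otimes> x) = (H #> inv y) #> x"
    using coset_mult_assoc[OF subgroup.subset[OF assms(1)] y assms(3)] by simp
  also have "H #> inv y = H" using coset_join2[OF y assms(1) \<open>inv y \<in> H\<close>] .
  finally show ?thesis .
qed

lemma inj_on_inv_mult:
  assumes "subgroup H G" "Y \<subseteq> H" "\<phi> ` T \<subseteq> carrier G" "inj_on (\<lambda>x. H #> \<phi> x) T"
  shows "inj_on (\<lambda>(y, x). inv y \<otimes> \<phi> x) (Y \<times> T)"
proof (rule inj_onI, clarify)
  fix y x y' x' assume yx: "y \<in> Y" "x \<in> T" "y' \<in> Y" "x' \<in> T" "inv y \<otimes> \<phi> x = inv y' \<otimes> \<phi> x'"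
  have H: "y \<in> H" "y' \<in> H" using yx(1,3) assms(2) by auto
  then have c: "y \<in> carrier G" "y' \<in> carrier G" using subgroup.subset[OF assms(1)] by auto
  have \<phi>: "\<phi> x \<in> carrier G" "\<phi> x' \<in> carrier G" using yx(2,4) assms(3) by auto
  have "H #> \<phi> x = H #> (inv y \<otimes> \<phi> x)" using r_coset_inv_mult[OF assms(1) H(1) \<phi>(1)] by simp
  also have "\<dots> = H #> \<phi> x'" using yx(5) r_coset_inv_mult[OF assms(1) H(2) \<phi>(2)] by simp
  finally have "x = x'" using inj_onD[OF assms(4)] yx(2,4) by blast
  then have "inv y = inv y'" using yx(5) c \<phi> by simp
  then have "inv (inv y) = inv (inv y')" by simp
  then show "y = y' \<and> x = x'" using c \<open>x = x'\<close> by simp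
qed

lemma schreier_edge_sym:
  assumes "S \<subseteq> carrier G" "\<forall>s\<in>S. inv s \<in> S" "schreier_edge G H S A B"
  shows "schreier_edge G H S B A"
proof -
  obtain g s where g: "g \<in> carrier G" "s \<in> S" "A = H #> g" "B = H #> (g \<otimes> s)"
    using assms(3) unfolding schreier_edge_def by blast
  have "s \<in> carrier G" using g(2) assms(1) by auto
  then have "g \<otimes> s \<in> carrier G" "inv s \<in> S" "g \<otimes> s \<otimes> inv s = g"
    using g(1,2) assms(2) by (auto simp: m_assoc)
  then show ?thesis unfolding schreier_edge_def using g(3,4)
    by (intro bexI[of _ "g \<otimes> s"] bexI[of _ "inv s"]) auto
qed

lemma schreier_walk_of_cayley_walk:
  assumes "walk (carrier G) (cayley_edge G S) p" "\<forall>x\<in>set p. H #> x \<in> W"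
  shows "walk W (schreier_edge G H S) (map (\<lambda>x. H #> x) p)"
  using assms by (rule walk_map(1)) (auto simp: cayley_edge_def schreier_edge_def)

lemma finite_coset_representatives:
  assumes "C \<subseteq> rcosets H" "finite C"
  obtains T where "finite T" "T \<subseteq> carrier G" "inj_on (\<lambda>x. H #> x) T" "(\<lambda>x. H #> x) ` T = C"
proof -
  have "C \<subseteq> (\<lambda>x. H #> x) ` carrier G" using assms(1) unfolding RCOSETS_def by auto
  then obtain T where "T \<subseteq> carrier G" "inj_on (\<lambda>x. H #> x) T" "C = (\<lambda>x. H #> x) ` T"
    by (auto simp: subset_image_inj)
  moreover then have "finite T" using assms(2) finite_image_iff by blast
  ultimately show ?thesis using that by blast
qed

lemma infinite_cosets_transversal:
  assumes "C \<subseteq> rcosets H" "infinite C"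
  obtains T where "finite T" "card T = n" "T \<subseteq> carrier G" "inj_on (\<lambda>x. H #> x) T"
    "(\<lambda>x. H #> x) ` T \<subseteq> C"
proof -
  obtain C' where C': "C' \<subseteq> C" "finite C'" "card C' = n"
    using infinite_arbitrarily_large[OF assms(2)] by blast
  have "C' \<subseteq> rcosets H" using C'(1) assms(1) by blast
  obtain T where T: "finite T" "T \<subseteq> carrier G" "inj_on (\<lambda>x. H #> x) T" "(\<lambda>x. H #> x) ` T = C'"
    by (rule finite_coset_representatives[OF \<open>C' \<subseteq> rcosets H\<close> C'(2)])
  then show ?thesis using that C' card_image[OF T(3)] by auto
qed

lemma finite_set_mult: "finite A \<Longrightarrow> finite B \<Longrightarrow> finite (A <#> B)"
  unfolding set_mult_def by auto

end

locale schreier_two_ends = group G for G (structure) +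
  fixes H S :: "'a set" and K CA CB :: "'a set set"
  assumes subgroup: "subgroup H G"
    and gens: "fin_symm_gen_set G S"
    and K: "finite K" "K \<subseteq> rcosets H"
    and CA: "CA \<subseteq> rcosets H - K" and CB: "CB \<subseteq> rcosets H - K"
    and infinite_CA: "infinite CA" and infinite_CB: "infinite CB"
    and disjoint: "CA \<inter> CB = {}"
    and CA_closed: "\<And>p. walk (rcosets H - K) (schreier_edge G H S) p \<Longrightarrow> hd p \<in> CA \<Longrightarrow> last p \<in> CA"

lemma (in schreier_two_ends) S_carrier: "S \<subseteq> carrier G"
  using gens unfolding fin_symm_gen_set_def by simp

lemma (in schreier_two_ends) S_finite: "finite S"
  using gens unfolding fin_symm_gen_set_def by simp

lemma (in schreier_two_ends) H_carrier: "H \<subseteq> carrier G"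
  using subgroup by (rule subgroup.subset)

locale schreier_transport = schreier_two_ends +
  fixes T R :: "'a set" and \<beta> :: "'a \<Rightarrow> 'a"
  assumes T: "finite T" "T \<subseteq> carrier G" "inj_on (\<lambda>x. H #> x) T" "(\<lambda>x. H #> x) ` T \<subseteq> CA"
    and \<beta>: "\<beta> ` T \<subseteq> carrier G" "inj_on (\<lambda>x. H #> \<beta> x) T" "(\<lambda>x. H #> \<beta> x) ` T \<subseteq> CB"
    and R: "finite R" "R \<subseteq> carrier G" "K \<subseteq> (\<lambda>\<rho>. H #> \<rho>) ` R"
begin

definition sources :: "'a set \<Rightarrow> 'a set" where
  "sources Y = (\<lambda>(y, x). inv y \<otimes> x) ` (Y \<times> T)"

definition targets :: "'a set \<Rightarrow> 'a set" where
  "targets Y = (\<lambda>(y, x). inv y \<otimes> \<beta> x) ` (Y \<times> T)"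

definition transport :: "'a set \<Rightarrow> 'a \<Rightarrow> 'a" where
  "transport Y = (\<lambda>(y, x). inv y \<otimes> \<beta> x) \<circ> the_inv_into (Y \<times> T) (\<lambda>(y, x). inv y \<otimes> x)"

definition blockers :: "'a set \<Rightarrow> nat \<Rightarrow> 'a set" where
  "blockers Y r = {v \<in> carrier G. H #> v \<in> K \<and> (\<exists>u\<in>sources Y. \<exists>z\<in>word_ball G S r. v = u \<otimes> z)}"

(* A blocker v = inv y \<otimes> x \<otimes> z over the coset H #> \<rho> equals inv (w \<otimes> y) \<otimes> \<rho> with
   w = \<rho> \<otimes> inv (x \<otimes> z) \<in> H, and these w form a finite set independent of Y. *)
definition multipliers :: "nat \<Rightarrow> 'a set" where
  "multipliers r = H \<inter> (\<lambda>(\<rho>, z, x). \<rho> \<otimes> inv (x \<otimes> z)) ` (R \<times> word_ball G S r \<times> T)"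

lemma sources_carrier: "Y \<subseteq> H \<Longrightarrow> sources Y \<subseteq> carrier G"
  and targets_carrier: "Y \<subseteq> H \<Longrightarrow> targets Y \<subseteq> carrier G"
  unfolding sources_def targets_def using T(2) \<beta>(1) H_carrier by (auto simp: subset_iff)

lemma sources_cosets:
  assumes "Y \<subseteq> H" "u \<in> sources Y"
  shows "H #> u \<in> CA"
proof -
  obtain y x where "y \<in> Y" "x \<in> T" "u = inv y \<otimes> x" using assms(2) unfolding sources_def by auto
  then show ?thesis using T(2,4) assms(1) r_coset_inv_mult[OF subgroup, of y x] by auto
qed

lemma targets_cosets:
  assumes "Y \<subseteq> H" "v \<in> targets Y"
  shows "H #> v \<in> CB"
proof -
  obtain y x where "y \<in> Y" "x \<in> T" "v = inv y \<otimes> \<beta> x" using assms(2) unfolding targets_def by auto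
  then show ?thesis using \<beta>(1,3) assms(1) r_coset_inv_mult[OF subgroup, of y "\<beta> x"] by auto
qed

lemma blockers_cosets: "v \<in> blockers Y r \<Longrightarrow> H #> v \<in> K"
  unfolding blockers_def by simp

lemma card_sources: "Y \<subseteq> H \<Longrightarrow> card (sources Y) = card Y * card T"
  unfolding sources_def using inj_on_inv_mult[OF subgroup, of Y id T] T(2,3)
  by (simp add: card_image card_cartesian_product)

lemma bij_betw_transport:
  assumes "Y \<subseteq> H"
  shows "bij_betw (transport Y) (sources Y) (targets Y)"
proof -
  have "bij_betw (\<lambda>(y, x). inv y \<otimes> x) (Y \<times> T) (sources Y)"
    using inj_on_inv_mult[OF subgroup assms, of id T] T(2,3) unfolding sources_def
    by (simp add: bij_betw_def)
  then have "bij_betw (the_inv_into (Y \<times> T) (\<lambda>(y, x). inv y \<otimes> x)) (sources Y) (Y \<times> T)"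
    by (rule bij_betw_the_inv_into)
  moreover have "bij_betw (\<lambda>(y, x). inv y \<otimes> \<beta> x) (Y \<times> T) (targets Y)"
    using inj_on_inv_mult[OF subgroup assms \<beta>(1,2)] unfolding targets_def by (simp add: bij_betw_def)
  ultimately show ?thesis unfolding transport_def by (rule bij_betw_trans)
qed

lemma transport_eq:
  assumes "Y \<subseteq> H" "y \<in> Y" "x \<in> T"
  shows "transport Y (inv y \<otimes> x) = (inv y \<otimes> x) \<otimes> (inv x \<otimes> \<beta> x)"
proof -
  have "the_inv_into (Y \<times> T) (\<lambda>(y, x). inv y \<otimes> x) (inv y \<otimes> x) = (y, x)"
    using the_inv_into_f_f[OF inj_on_inv_mult[OF subgroup assms(1), of id T], of "(y, x)"] T(2,3) assms(2,3)
    by simp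
  moreover have c: "y \<in> carrier G" "x \<in> carrier G" "\<beta> x \<in> carrier G"
    using assms T(2) \<beta>(1) H_carrier by auto
  moreover have "x \<otimes> (inv x \<otimes> \<beta> x) = \<beta> x" using c by (simp add: m_assoc[symmetric])
  ultimately show ?thesis unfolding transport_def by (simp add: m_assoc)
qed

lemma gdist_transport:
  assumes "Y \<subseteq> H" "(\<lambda>x. inv x \<otimes> \<beta> x) ` T \<subseteq> word_ball G S k" "u \<in> sources Y"
  shows "gdist (carrier G) (cayley_edge G S) u (transport Y u) \<le> enat k"
proof -
  obtain y x where yx: "y \<in> Y" "x \<in> T" "u = inv y \<otimes> x" using assms(3) unfolding sources_def by auto
  have "inv x \<otimes> \<beta> x \<in> word_ball G S k" using assms(2) yx(2) by auto
  moreover have "u \<in> carrier G" using sources_carrier[OF assms(1)] assms(3) by auto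
  ultimately show ?thesis
    using gdist_cayley_word_ball[OF S_carrier] transport_eq[OF assms(1) yx(1,2)] yx(3) by simp
qed

lemma multipliers_finite: "finite (multipliers r)"
proof -
  have "finite (R \<times> word_ball G S r \<times> T)" using R(1) T(1) word_ball_finite[OF S_finite] by blast
  then show ?thesis unfolding multipliers_def by simp
qed

lemma multipliers_subset: "multipliers r \<subseteq> H"
  unfolding multipliers_def by simp

lemma blockers_finite:
  assumes "finite Y"
  shows "finite (blockers Y r)"
proof -
  have "blockers Y r \<subseteq> (\<lambda>(u, z). u \<otimes> z) ` (sources Y \<times> word_ball G S r)"
    unfolding blockers_def by auto
  moreover have "finite (sources Y \<times> word_ball G S r)"
    unfolding sources_def using assms T(1) word_ball_finite[OF S_finite] by auto
  ultimately show ?thesis by (meson finite_imageI finite_subset)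
qed

lemma card_blockers:
  assumes "Y \<subseteq> H" "finite Y"
  shows "card (blockers Y r) \<le> card (multipliers r <#> Y) * card R"
proof -
  have "blockers Y r \<subseteq> (\<lambda>(w, \<rho>). inv w \<otimes> \<rho>) ` ((multipliers r <#> Y) \<times> R)"
  proof
    fix v assume "v \<in> blockers Y r"
    then obtain y x z where yxz: "y \<in> Y" "x \<in> T" "z \<in> word_ball G S r" "v = inv y \<otimes> x \<otimes> z"
      and v: "v \<in> carrier G" "H #> v \<in> K"
      unfolding blockers_def sources_def by auto
    obtain \<rho> where \<rho>: "\<rho> \<in> R" "H #> v = H #> \<rho>" using R(3) v(2) by auto
    have c: "y \<in> carrier G" "x \<in> carrier G" "z \<in> carrier G" "\<rho> \<in> carrier G"
      using yxz(1-3) \<rho>(1) assms(1) H_carrier T(2) R(2) word_ball_carrier[OF S_carrier, of r] by auto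
    have "v \<otimes> inv \<rho> \<in> H"
      using subgroup.rcos_module_imp[OF subgroup is_group c(4)] rcos_self[OF v(1) subgroup] \<rho>(2)
      by simp
    define w where "w = \<rho> \<otimes> inv (x \<otimes> z)"
    have "w = inv (v \<otimes> inv \<rho>) \<otimes> inv y" unfolding w_def yxz(4) using c by (simp add: inv_mult_group m_assoc)
    moreover have "inv (v \<otimes> inv \<rho>) \<in> H" "inv y \<in> H"
      using \<open>v \<otimes> inv \<rho> \<in> H\<close> yxz(1) assms(1) subgroup.m_inv_closed[OF subgroup] by auto
    ultimately have "w \<in> H" using subgroup.m_closed[OF subgroup] by simp
    then have "w \<in> multipliers r" unfolding multipliers_def w_def using \<rho>(1) yxz(2,3) by force
    then have "w \<otimes> y \<in> multipliers r <#> Y" unfolding set_mult_def using yxz(1) by auto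
    moreover have "v = inv (w \<otimes> y) \<otimes> \<rho>" unfolding w_def yxz(4) using c by (simp add: inv_mult_group m_assoc)
    ultimately show "v \<in> (\<lambda>(w, \<rho>). inv w \<otimes> \<rho>) ` ((multipliers r <#> Y) \<times> R)"
      using \<rho>(1) by force
  qed
  moreover have "finite ((multipliers r <#> Y) \<times> R)"
    using finite_set_mult[OF multipliers_finite assms(2)] R(1) by simp
  ultimately have "card (blockers Y r) \<le> card ((multipliers r <#> Y) \<times> R)"
    by (meson card_image_le card_mono finite_imageI le_trans)
  then show ?thesis by (simp add: card_cartesian_product)
qed

lemma short_walk_meets_blockers:
  assumes "Y \<subseteq> H" "walk (carrier G) (cayley_edge G S) p" "hd p \<in> sources Y" "last p \<in> targets Y"
    and "walk_len p \<le> r"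
  shows "set p \<inter> blockers Y r \<noteq> {}"
proof
  assume avoid: "set p \<inter> blockers Y r = {}"
  have p_carrier: "set p \<subseteq> carrier G" using assms(2) unfolding walk_def by simp
  have "H #> x \<notin> K" if x: "x \<in> set p" for x
  proof
    assume "H #> x \<in> K"
    obtain z where z: "z \<in> word_ball G S (walk_len p)" "x = hd p \<otimes> z"
      using cayley_walk_word_ball[OF S_carrier assms(2) x] by blast
    have "z \<in> word_ball G S r" using z(1) word_ball_mono[OF assms(5), of G S] by blast
    moreover have "x \<in> carrier G" using x p_carrier by blast
    ultimately have "x \<in> blockers Y r"
      unfolding blockers_def using \<open>H #> x \<in> K\<close> assms(3) z(2) by blast
    then show False using avoid x by blast
  qed
  moreover have "H #> x \<in> rcosets H" if "x \<in> set p" for x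
    using that p_carrier unfolding RCOSETS_def by auto
  ultimately have "walk (rcosets H - K) (schreier_edge G H S) (map (\<lambda>x. H #> x) p)"
    by (intro schreier_walk_of_cayley_walk[OF assms(2)]) blast
  moreover have "p \<noteq> []" using assms(2) unfolding walk_def by simp
  ultimately have "last (map (\<lambda>x. H #> x) p) \<in> CA"
    using CA_closed sources_cosets[OF assms(1,3)] by (simp add: hd_map)
  then have "H #> last p \<in> CA" using \<open>p \<noteq> []\<close> by (simp add: last_map)
  then show False using targets_cosets[OF assms(1,4)] disjoint by blast
qed

lemma separating_triple_transport:
  assumes "finite Y" "Y \<noteq> {}" "Y \<subseteq> H" "T \<noteq> {}" "(\<lambda>x. inv x \<otimes> \<beta> x) ` T \<subseteq> word_ball G S k"
  shows "separating_triple (carrier G) (cayley_edge G S) k r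
           (sources Y) (blockers Y r) (targets Y) (transport Y)"
  unfolding separating_triple_def
proof (intro conjI)
  show "sources Y \<subseteq> carrier G" "targets Y \<subseteq> carrier G"
    using sources_carrier[OF assms(3)] targets_carrier[OF assms(3)] .
  show "blockers Y r \<subseteq> carrier G" unfolding blockers_def by blast
  show "finite (sources Y)" "finite (targets Y)"
    unfolding sources_def targets_def using assms(1) T(1) by auto
  show "finite (blockers Y r)" using blockers_finite[OF assms(1)] .
  show "sources Y \<noteq> {}" unfolding sources_def using assms(2,4) by auto
  show "sources Y \<inter> blockers Y r = {}"
    using sources_cosets[OF assms(3)] blockers_cosets CA by blast
  show "sources Y \<inter> targets Y = {}"
    using sources_cosets[OF assms(3)] targets_cosets[OF assms(3)] disjoint by blast
  show "blockers Y r \<inter> targets Y = {}"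
    using targets_cosets[OF assms(3)] blockers_cosets CB by blast
  show "bij_betw (transport Y) (sources Y) (targets Y)" using bij_betw_transport[OF assms(3)] .
  show "\<forall>u\<in>sources Y. gdist (carrier G) (cayley_edge G S) u (transport Y u) \<le> enat k"
    using gdist_transport[OF assms(3,5)] by blast
  show "\<forall>p. walk (carrier G) (cayley_edge G S) p \<and> hd p \<in> sources Y \<and> last p \<in> targets Y \<longrightarrow>
          set p \<inter> blockers Y r \<noteq> {} \<or> r \<le> walk_len p"
    using short_walk_meets_blockers[OF assms(3)] by (meson nat_le_linear)
qed

lemma amenable_separating_triple:
  assumes amenable: "amenable_group (G\<lparr>carrier := H\<rparr>)"
    and "T \<noteq> {}" "(\<lambda>x. inv x \<otimes> \<beta> x) ` T \<subseteq> word_ball G S k" "2 * m * card R \<le> card T"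
  shows "\<exists>U F Ou \<mu>. separating_triple (carrier G) (cayley_edge G S) k r U F Ou \<mu> \<and> card U \<ge> m * card F"
proof -
  have "group (G\<lparr>carrier := H\<rparr>)" using subgroup.subgroup_is_group[OF subgroup is_group] .
  moreover have "countable H"
    using countable_subset[OF H_carrier fin_symm_gen_set_countable[OF gens]] .
  ultimately obtain Y where Y: "finite Y" "Y \<noteq> {}" "Y \<subseteq> H" "card (multipliers r <#> Y) \<le> 2 * card Y"
    using group.amenable_small_doubling[OF _ amenable _ multipliers_finite, of r] multipliers_subset
    by (auto simp: set_mult_def)
  have "card (blockers Y r) \<le> 2 * card Y * card R"
    using card_blockers[OF Y(3,1), of r] mult_le_mono1[OF Y(4), of "card R"] by linarith
  then have "m * card (blockers Y r) \<le> card Y * (2 * m * card R)" by (simp add: algebra_simps)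
  also have "\<dots> \<le> card (sources Y)" using card_sources[OF Y(3)] assms(4) by simp
  finally show ?thesis using separating_triple_transport[OF Y(1-3) assms(2,3)] by blast
qed

end

lemma (in schreier_two_ends) matched_transversals:
  obtains T \<beta> where "finite T" "card T = n" "T \<subseteq> carrier G" "inj_on (\<lambda>x. H #> x) T"
    "(\<lambda>x. H #> x) ` T \<subseteq> CA" "\<beta> ` T \<subseteq> carrier G" "inj_on (\<lambda>x. H #> \<beta> x) T"
    "(\<lambda>x. H #> \<beta> x) ` T \<subseteq> CB"
proof -
  obtain T where T: "finite T" "card T = n" "T \<subseteq> carrier G" "inj_on (\<lambda>x. H #> x) T"
      "(\<lambda>x. H #> x) ` T \<subseteq> CA"
    by (rule infinite_cosets_transversal[OF _ infinite_CA]) (use CA in blast)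
  obtain T' where T': "finite T'" "card T' = n" "T' \<subseteq> carrier G" "inj_on (\<lambda>x. H #> x) T'"
      "(\<lambda>x. H #> x) ` T' \<subseteq> CB"
    by (rule infinite_cosets_transversal[OF _ infinite_CB]) (use CB in blast)
  obtain \<beta> where \<beta>: "bij_betw \<beta> T T'" using finite_same_card_bij[OF T(1) T'(1)] T(2) T'(2) by auto
  then have "\<beta> ` T = T'" by (rule bij_betw_imp_surj_on)
  moreover have "inj_on (\<lambda>x. H #> \<beta> x) T"
    using comp_inj_on[OF bij_betw_imp_inj_on[OF \<beta>]] T'(4) \<open>\<beta> ` T = T'\<close> by (simp add: comp_def)
  ultimately show ?thesis using that T T'(3,5) by (auto simp: image_subset_iff)
qed

lemma (in schreier_two_ends) extraterrestrial_cayley_graph: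
  assumes "amenable_group (G\<lparr>carrier := H\<rparr>)"
  shows "extraterrestrial_graph (carrier G) (cayley_edge G S)"
  unfolding extraterrestrial_graph_iff_separating_triples
proof
  fix m
  obtain R where reps: "finite R" "R \<subseteq> carrier G" "K \<subseteq> (\<lambda>\<rho>. H #> \<rho>) ` R"
    using finite_coset_representatives[OF K(2,1)] by (metis order_refl)
  (* the + 1 keeps T nonempty when m = 0 *)
  obtain T \<beta> where transversal: "finite T" "card T = 2 * m * card R + 1" "T \<subseteq> carrier G"
      "inj_on (\<lambda>x. H #> x) T" "(\<lambda>x. H #> x) ` T \<subseteq> CA"
    and partner: "\<beta> ` T \<subseteq> carrier G" "inj_on (\<lambda>x. H #> \<beta> x) T" "(\<lambda>x. H #> \<beta> x) ` T \<subseteq> CB"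
    by (rule matched_transversals)
  interpret schreier_transport G H S K CA CB T R \<beta>
    by standard (fact transversal(1,3-5) partner reps)+
  have "(\<lambda>x. inv x \<otimes> \<beta> x) ` T \<subseteq> carrier G" using T(2) \<beta>(1) by auto
  then obtain k where k: "(\<lambda>x. inv x \<otimes> \<beta> x) ` T \<subseteq> word_ball G S k"
    using fin_symm_gen_set_word_ball[OF gens] T(1) by blast
  have "T \<noteq> {}" "2 * m * card R \<le> card T" using transversal(2) by auto
  then show "\<exists>k. \<forall>r. \<exists>U F Ou \<mu>. separating_triple (carrier G) (cayley_edge G S) k r U F Ou \<mu> \<and>
      card U \<ge> m * card F"
    using amenable_separating_triple[OF assms _ k] by blast
qed

lemma (in group) multi_ended_schreier_graph_imp_extraterrestrial:
  assumes "amenable_subgroup H G" "fin_symm_gen_set G S"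
    and "multi_ended (schreier_vertices G H) (schreier_edge G H S)"
  shows "extraterrestrial_group G"
proof -
  let ?E = "schreier_edge G H S"
  let ?C = "\<lambda>K. induced_component (rcosets H - K) ?E"
  obtain K a b where K: "finite K" "K \<subseteq> rcosets H"
    and ends: "infinite (?C K a)" "infinite (?C K b)" "?C K a \<noteq> ?C K b"
    using assms(3) unfolding multi_ended_def schreier_vertices_def by blast
  have sym: "\<And>A B. ?E A B \<Longrightarrow> ?E B A"
    using schreier_edge_sym assms(2) unfolding fin_symm_gen_set_def by blast
  interpret schreier_two_ends G H S K "?C K a" "?C K b"
  proof (rule schreier_two_ends.intro[OF is_group], rule schreier_two_ends_axioms.intro)
    show "subgroup H G" using assms(1) unfolding amenable_subgroup_def by simp
    show "?C K a \<subseteq> rcosets H - K" "?C K b \<subseteq> rcosets H - K"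
      by (rule induced_component_subset)+
    show "?C K a \<inter> ?C K b = {}"
    proof (rule equals0I)
      fix c assume "c \<in> ?C K a \<inter> ?C K b"
      then show False using induced_component_eqI[where E = ?E, OF sym, of c] ends(3) by blast
    qed
    show "last p \<in> ?C K a" if "walk (rcosets H - K) ?E p" "hd p \<in> ?C K a" for p
      using induced_component_walk[OF that(2,1) refl] .
  qed (fact assms(2) K ends(1,2))+
  show ?thesis
    using extraterrestrial_cayley_graph assms(1,2)
    unfolding extraterrestrial_group_def amenable_subgroup_def by blast
qed

(* Finite generation of G is already part of fin_symm_gen_set G S. *)
theorem mainTheorem9:
  fixes G :: "('a, 'b) monoid_scheme" and H S :: "'a set"
  assumes "group G"
    and "finitely_generated_group G"
    and "amenable_subgroup H G"
    and "fin_symm_gen_set G S"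
    and "multi_ended (schreier_vertices G H) (schreier_edge G H S)"
  shows "extraterrestrial_group G"
  using group.multi_ended_schreier_graph_imp_extraterrestrial[OF assms(1,3-5)] .

end
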